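(* (i) For every even integer $q\ge 2$ there exists a $q$-solvable directed graph with $3q/2$ vertices and clique number $q/2$. (ii) For every positive integer $q$ divisible by $3$ there exists a $q$-solvable directed graph on $4q$ vertices with clique number $q/3$. (iii) For every positive integer $q$ divisible by $4$ there exists a $q$-solvable directed graph on $10q$ vertices with clique number $q/4$.
   Context: A directed graph $D=(V,E)$ has arcs $E \subseteq \{(u,v)\in V^2 : u \neq v\}$ (bidirectional pairs allowed). $N^-(v)=\{u:(u,v)\in E\}$. For $q\ge2$ let $[q]=\{0,\dots,q-1\}$. A $D$-function over $[q]$ is a map $f=(f_v)_{v\in V}:[q]^V\to[q]^V$ with each $f_v(x)$ depending only on $(x_u)_{u\in N^-(v)}$. $D$ is $q$-solvable if some $D$-function $f$ over $[q]$ has the property that for every $x\in[q]^V$ there is $v$ with $f_v(x)=x_v$. A clique in a directed graph is a set $S$ of vertices such that $(u,v)$ is an arc for every ordered pair of distinct $u,v\in S$ (i.e. all pairs are joined in both directions); the clique number is the maximum size of a clique. *)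

theory Defs
  imports Main "HOL-Library.FuncSet"
begin

definition digraph :: "'a set \<Rightarrow> ('a \<times> 'a) set \<Rightarrow> bool" where
  "digraph V E \<longleftrightarrow> finite V \<and> E \<subseteq> {(u, v). u \<in> V \<and> v \<in> V \<and> u \<noteq> v}"

definition in_nbrs :: "('a \<times> 'a) set \<Rightarrow> 'a \<Rightarrow> 'a set" where
  "in_nbrs E v = {u. (u, v) \<in> E}"

definition configs :: "nat \<Rightarrow> 'a set \<Rightarrow> ('a \<Rightarrow> nat) set" where
  "configs q V = V \<rightarrow>\<^sub>E {..<q}"

text \<open>A D-function over [q]: f v x is the v-th coordinate of f(x); it takes
  values in [q] and depends only on the values of x on the in-neighbourhood of v.\<close>
definition D_function :: "nat \<Rightarrow> 'a set \<Rightarrow> ('a \<times> 'a) set \<Rightarrow> ('a \<Rightarrow> ('a \<Rightarrow> nat) \<Rightarrow> nat) \<Rightarrow> bool" where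
  "D_function q V E f \<longleftrightarrow>
     (\<forall>v\<in>V. \<forall>x\<in>configs q V. f v x < q) \<and>
     (\<forall>v\<in>V. \<forall>x\<in>configs q V. \<forall>y\<in>configs q V.
        (\<forall>u\<in>in_nbrs E v. x u = y u) \<longrightarrow> f v x = f v y)"

definition q_solvable :: "nat \<Rightarrow> 'a set \<Rightarrow> ('a \<times> 'a) set \<Rightarrow> bool" where
  "q_solvable q V E \<longleftrightarrow>
     (\<exists>f. D_function q V E f \<and> (\<forall>x\<in>configs q V. \<exists>v\<in>V. f v x = x v))"

definition is_clique :: "'a set \<Rightarrow> ('a \<times> 'a) set \<Rightarrow> 'a set \<Rightarrow> bool" where
  "is_clique V E S \<longleftrightarrow> S \<subseteq> V \<and> (\<forall>u\<in>S. \<forall>v\<in>S. u \<noteq> v \<longrightarrow> (u, v) \<in> E)"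

definition clique_number :: "'a set \<Rightarrow> ('a \<times> 'a) set \<Rightarrow> nat" where
  "clique_number V E = Max (card ` {S. is_clique V E S})"

end

theory Submission
  imports Defs
begin

text \<open>Blow up every vertex of an oriented \<open>r\<close>-solvable digraph \<open>H\<close> into a clique of \<open>m\<close>
  vertices, joining all of block \<open>u\<close> to all of block \<open>i\<close> whenever \<open>u \<rightarrow> i\<close> in \<open>H\<close>.
  Writing the sum of block \<open>i\<close> modulo \<open>rm\<close> as \<open>z\<^sub>i m + t\<^sub>i\<close> with \<open>z\<^sub>i < r\<close>, \<open>t\<^sub>i < m\<close>, the
  quotients \<open>z\<close> form a configuration of \<open>H\<close>, visible to block \<open>i\<close> exactly where \<open>H\<close> allows.
  Vertex \<open>j\<close> of block \<open>i\<close> plays as if \<open>z\<^sub>i\<close> were \<open>H\<close>'s guess \<open>g\<^sub>i(z)\<close> and \<open>t\<^sub>i = j\<close>; at a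
  vertex \<open>i\<close> where \<open>H\<close>'s rule is right, the vertex \<open>j = t\<^sub>i\<close> is right. As \<open>H\<close> has no
  2-cycles, cliques stay inside blocks, so the clique number is \<open>m\<close>; isolated vertices pad
  the vertex count. The three statements come from the directed triangle (\<open>r = 2\<close>), a
  six-vertex digraph with a linear rule over \<open>\<int>\<^sub>3\<close> (\<open>r = 3\<close>), and a seven-vertex digraph built
  on the Fano plane that guesses the two bits of a value in \<open>[4]\<close> separately (\<open>r = 4\<close>).\<close>

text \<open>Vertex \<open>a < n m\<close> is member \<open>a mod m\<close> of block \<open>a div m\<close>; vertices \<open>a \<ge> n m\<close> are isolated.\<close>
definition blowup_arcs :: "nat \<Rightarrow> nat \<Rightarrow> (nat \<times> nat) set \<Rightarrow> (nat \<times> nat) set" where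
  "blowup_arcs n m H = {(a, b). a < n * m \<and> b < n * m \<and> a \<noteq> b \<and>
     (a div m = b div m \<or> (a div m, b div m) \<in> H)}"

lemma block_index_less:
  assumes "i < n" "j < (m::nat)"
  shows "i * m + j < n * m"
proof -
  have "i * m + j < Suc i * m" using assms(2) by simp
  also have "\<dots> \<le> n * m" using assms(1) by (intro mult_le_mono1) simp
  finally show ?thesis .
qed

lemma digraph_blowup_arcs: "n * m \<le> N \<Longrightarrow> digraph {..<N} (blowup_arcs n m H)"
  unfolding digraph_def blowup_arcs_def by auto

lemma blowup_clique_within_block:
  assumes "asym H" and "is_clique V (blowup_arcs n m H) S" and "a \<in> S" "b \<in> S"
  shows "a div m = b div m"
proof (rule ccontr)
  assume ne: "a div m \<noteq> b div m"
  then have "(a, b) \<in> blowup_arcs n m H" "(b, a) \<in> blowup_arcs n m H"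
    using assms(2-4) unfolding is_clique_def by auto
  with ne show False using asymD[OF \<open>asym H\<close>] unfolding blowup_arcs_def by auto
qed

lemma clique_number_blowup_arcs:
  assumes "asym H" "0 < n" "0 < m" "n * m \<le> N"
  shows "clique_number {..<N} (blowup_arcs n m H) = m"
proof -
  let ?cliques = "{S. is_clique {..<N} (blowup_arcs n m H) S}"
  have "finite ?cliques"
    by (rule finite_subset[of _ "Pow {..<N}"]) (auto simp: is_clique_def)
  moreover have "{..<m} \<in> ?cliques"
  proof -
    have "m \<le> n * m" using \<open>0 < n\<close> by simp
    with assms(4) have "m \<le> N" by linarith
    with \<open>m \<le> n * m\<close> show ?thesis
      unfolding is_clique_def blowup_arcs_def by (auto intro: less_le_trans)
  qed
  moreover have "card S \<le> m" if "S \<in> ?cliques" for S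
  proof (cases "S = {}")
    case False
    then obtain a where "a \<in> S" by blast
    have "S \<subseteq> {a div m * m..<a div m * m + m}"
    proof
      fix b assume "b \<in> S"
      then have "b div m = a div m"
        using blowup_clique_within_block[OF \<open>asym H\<close>] that \<open>a \<in> S\<close> by blast
      then show "b \<in> {a div m * m..<a div m * m + m}"
        using div_mult_mod_eq[of b m] mod_less_divisor[OF \<open>0 < m\<close>, of b] by auto
    qed
    then show ?thesis using card_mono[of "{a div m * m..<a div m * m + m}" S] by simp
  qed simp
  ultimately show ?thesis unfolding clique_number_def
    by (intro Max_eqI) (auto intro!: image_eqI[where x = "{..<m}"])
qed

definition block_sum :: "nat \<Rightarrow> nat \<Rightarrow> (nat \<Rightarrow> nat) \<Rightarrow> nat \<Rightarrow> nat" where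
  "block_sum m r x i = (\<Sum>j<m. x (i * m + j)) mod (r * m)"

definition block_config :: "nat \<Rightarrow> nat \<Rightarrow> nat \<Rightarrow> (nat \<Rightarrow> nat) \<Rightarrow> nat \<Rightarrow> nat" where
  "block_config n m r x = restrict (\<lambda>i. block_sum m r x i div m) {..<n}"

definition blowup_rule ::
  "nat \<Rightarrow> nat \<Rightarrow> nat \<Rightarrow> (nat \<Rightarrow> (nat \<Rightarrow> nat) \<Rightarrow> nat) \<Rightarrow> nat \<Rightarrow> (nat \<Rightarrow> nat) \<Rightarrow> nat" where
  "blowup_rule n m r g a x =
     (if a < n * m then
        nat ((int (g (a div m) (block_config n m r x) * m + a mod m)
              - int (\<Sum>j\<in>{..<m} - {a mod m}. x (a div m * m + j))) mod int (r * m))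
      else 0)"

lemma block_config_in_configs:
  assumes "0 < r" "0 < m"
  shows "block_config n m r x \<in> configs r {..<n}"
proof -
  have "block_sum m r x i < r * m" for i using assms unfolding block_sum_def by simp
  then have "block_sum m r x i div m < r" for i by (simp add: less_mult_imp_div_less)
  then show ?thesis unfolding block_config_def configs_def by auto
qed

lemma block_config_cong:
  assumes "\<And>j. j < m \<Longrightarrow> x (i * m + j) = y (i * m + j)"
  shows "block_config n m r x i = block_config n m r y i"
proof -
  have "(\<Sum>j<m. x (i * m + j)) = (\<Sum>j<m. y (i * m + j))" using assms by (intro sum.cong) auto
  then show ?thesis unfolding block_config_def block_sum_def by simp
qed

lemma in_blowup_arcs_if:
  assumes "a < n * m" "k < n" "j < m" "k * m + j \<noteq> a" "k = a div m \<or> (k, a div m) \<in> H"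
  shows "(k * m + j, a) \<in> blowup_arcs n m H"
  using assms block_index_less[of k n j m] unfolding blowup_arcs_def by auto

lemma D_function_blowup_rule:
  assumes H: "digraph {..<n} H" and g: "D_function r {..<n} H g" and "0 < r" "0 < m"
  shows "D_function (r * m) {..<N} (blowup_arcs n m H) (blowup_rule n m r g)"
  unfolding D_function_def
proof (intro conjI ballI impI)
  fix a x show "blowup_rule n m r g a x < r * m"
    using assms by (auto simp: blowup_rule_def nat_less_iff)
next
  fix a and x y :: "nat \<Rightarrow> nat"
  assume agree: "\<forall>u\<in>in_nbrs (blowup_arcs n m H) a. x u = y u"
  show "blowup_rule n m r g a x = blowup_rule n m r g a y"
  proof (cases "a < n * m")
    case a: True
    define i where "i = a div m"
    have i: "i < n" using a unfolding i_def by (simp add: less_mult_imp_div_less)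
    have agree_block: "x (k * m + j) = y (k * m + j)"
      if "k < n" "j < m" "k * m + j \<noteq> a" "k = i \<or> (k, i) \<in> H" for k j
      using in_blowup_arcs_if[OF a that(1-3)] that(4) agree unfolding i_def in_nbrs_def by auto
    have "(\<Sum>j\<in>{..<m} - {a mod m}. x (i * m + j)) = (\<Sum>j\<in>{..<m} - {a mod m}. y (i * m + j))"
    proof (rule sum.cong)
      fix j assume "j \<in> {..<m} - {a mod m}"
      moreover have "a = i * m + a mod m" unfolding i_def by simp
      ultimately show "x (i * m + j) = y (i * m + j)" using agree_block[OF i] by auto
    qed simp
    moreover have "g i (block_config n m r x) = g i (block_config n m r y)"
    proof -
      have "block_config n m r x u = block_config n m r y u" if "u \<in> in_nbrs H i" for u
      proof (rule block_config_cong)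
        fix j assume "j < m"
        have "(u, i) \<in> H" using that unfolding in_nbrs_def by simp
        with H have "u < n" "u \<noteq> i" unfolding digraph_def by auto
        then have "u * m + j \<noteq> a" using \<open>j < m\<close> unfolding i_def by auto
        then show "x (u * m + j) = y (u * m + j)"
          using agree_block \<open>u < n\<close> \<open>j < m\<close> \<open>(u, i) \<in> H\<close> by blast
      qed
      then show ?thesis
        using g block_config_in_configs[OF \<open>0 < r\<close> \<open>0 < m\<close>] i unfolding D_function_def by blast
    qed
    ultimately show ?thesis using a unfolding blowup_rule_def i_def by simp
  qed (simp add: blowup_rule_def)
qed

lemma blowup_rule_fixed_point:
  assumes "0 < m" "n * m \<le> N" "i < n" and x: "x \<in> configs (r * m) {..<N}"
    and g: "g i (block_config n m r x) = block_config n m r x i"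
  shows "\<exists>a\<in>{..<N}. blowup_rule n m r g a x = x a"
proof -
  define s where "s = block_sum m r x i"
  define a where "a = i * m + s mod m"
  define rest where "rest = (\<Sum>j\<in>{..<m} - {s mod m}. x (i * m + j))"
  have a: "a < n * m" unfolding a_def using block_index_less \<open>0 < m\<close> \<open>i < n\<close> by simp
  then have "a \<in> {..<N}" using \<open>n * m \<le> N\<close> by simp
  then have "x a < r * m" using x unfolding configs_def by auto
  have a_div_mod: "a div m = i" "a mod m = s mod m" unfolding a_def using \<open>0 < m\<close> by auto
  have "(\<Sum>j<m. x (i * m + j)) = x a + rest"
    unfolding rest_def a_def using \<open>0 < m\<close> by (simp add: sum.remove[of "{..<m}" "s mod m"])
  then have s: "int s = (int (x a) + int rest) mod int (r * m)"
    unfolding s_def block_sum_def by (simp add: zmod_int)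
  have "blowup_rule n m r g a x = nat ((int (s div m * m + s mod m) - int rest) mod int (r * m))"
    using a a_div_mod g \<open>i < n\<close>
    unfolding blowup_rule_def rest_def s_def block_config_def by simp
  also have "\<dots> = nat ((int (x a) + int rest - int rest) mod int (r * m))"
    unfolding div_mult_mod_eq s by (simp add: mod_diff_left_eq)
  also have "\<dots> = x a" using \<open>x a < r * m\<close> by (metis add_diff_cancel_right' mod_less nat_int zmod_int)
  finally show ?thesis using \<open>a \<in> {..<N}\<close> by blast
qed

lemma q_solvable_blowup_arcs:
  assumes "q_solvable r {..<n} H" "digraph {..<n} H" "0 < r" "0 < m" "n * m \<le> N"
  shows "q_solvable (r * m) {..<N} (blowup_arcs n m H)"
proof -
  obtain g where g: "D_function r {..<n} H g"
    and fixed: "\<forall>z\<in>configs r {..<n}. \<exists>i\<in>{..<n}. g i z = z i"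
    using assms(1) unfolding q_solvable_def by blast
  have "\<exists>a\<in>{..<N}. blowup_rule n m r g a x = x a" if "x \<in> configs (r * m) {..<N}" for x
  proof -
    obtain i where "i < n" "g i (block_config n m r x) = block_config n m r x i"
      using fixed block_config_in_configs[OF assms(3,4)] by blast
    then show ?thesis using blowup_rule_fixed_point assms(4,5) that by blast
  qed
  then show ?thesis
    using D_function_blowup_rule[OF assms(2) g assms(3,4)] unfolding q_solvable_def by blast
qed

lemma solvable_blowup_of_oriented_base:
  assumes "q_solvable r {..<n} H" "digraph {..<n} H" "asym H" "0 < n" "0 < r" "0 < m" "n * m \<le> N"
  shows "\<exists>(V::nat set) E. digraph V E \<and> card V = N \<and> q_solvable (r * m) V E \<and> clique_number V E = m"
  using digraph_blowup_arcs[OF assms(7)] q_solvable_blowup_arcs[OF assms(1,2,5-7)]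
    clique_number_blowup_arcs[OF assms(3,4,6,7)]
  by (intro exI[of _ "{..<N}"] exI[of _ "blowup_arcs n m H"]) simp

definition arcs_of_in_lists :: "nat \<Rightarrow> (nat \<Rightarrow> nat list) \<Rightarrow> (nat \<times> nat) set" where
  "arcs_of_in_lists n ins = {(u, i). i < n \<and> u \<in> set (ins i)}"

lemma q_solvable_arcs_of_in_lists:
  fixes ins :: "nat \<Rightarrow> nat list" and G :: "nat \<Rightarrow> nat list \<Rightarrow> nat"
  assumes G_less: "\<And>i vs. G i vs < r"
    and fixed_point: "\<And>z. (\<And>u. u < n \<Longrightarrow> z u < r) \<Longrightarrow> \<exists>i<n. G i (map z (ins i)) = z i"
  shows "q_solvable r {..<n} (arcs_of_in_lists n ins)"
proof -
  let ?f = "\<lambda>i z. G i (map z (ins i))"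
  have "D_function r {..<n} (arcs_of_in_lists n ins) ?f"
    unfolding D_function_def in_nbrs_def arcs_of_in_lists_def
  proof (intro conjI ballI impI)
    fix v and x y :: "nat \<Rightarrow> nat"
    assume "v \<in> {..<n}" and "\<forall>u\<in>{u. (u, v) \<in> {(u, i). i < n \<and> u \<in> set (ins i)}}. x u = y u"
    then have "map x (ins v) = map y (ins v)" by (intro map_cong) auto
    then show "?f v x = ?f v y" by (rule arg_cong)
  qed (use G_less in auto)
  moreover have "\<exists>v\<in>{..<n}. ?f v x = x v" if "x \<in> configs r {..<n}" for x
    using fixed_point[of x] that unfolding configs_def by auto
  ultimately show ?thesis unfolding q_solvable_def by blast
qed

definition linear_rule :: "nat \<Rightarrow> nat list \<Rightarrow> nat list \<Rightarrow> nat" where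
  "linear_rule q cs vs = (\<Sum>(c, v)\<leftarrow>zip cs vs. c * v) mod q"

definition cycle3_in :: "nat \<Rightarrow> nat list" where
  "cycle3_in i = [[2], [0], [1]] ! i"

lemma cycle3_oriented:
  "digraph {..<3} (arcs_of_in_lists 3 cycle3_in)" "asym (arcs_of_in_lists 3 cycle3_in)"
  by (auto simp: digraph_def arcs_of_in_lists_def cycle3_in_def less_Suc_eq eval_nat_numeral intro!: asymI)

lemma q_solvable_cycle3: "q_solvable 2 {..<3} (arcs_of_in_lists 3 cycle3_in)"
proof (rule q_solvable_arcs_of_in_lists)
  show "linear_rule 2 [1] vs < 2" for vs by (simp add: linear_rule_def)
  fix z :: "nat \<Rightarrow> nat" assume "\<And>u. u < 3 \<Longrightarrow> z u < 2"
  then have "z 0 < 2" "z 1 < 2" "z 2 < 2" by auto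
  then have "z 2 = z 0 \<or> z 0 = z 1 \<or> z 1 = z 2" by linarith
  then show "\<exists>i<3. linear_rule 2 [1] (map z (cycle3_in i)) = z i"
  proof (elim disjE)
    assume "z 2 = z 0"
    then show ?thesis using \<open>z 2 < 2\<close> by (intro exI[of _ 0]) (simp add: linear_rule_def cycle3_in_def)
  next
    assume "z 0 = z 1"
    then show ?thesis using \<open>z 0 < 2\<close> by (intro exI[of _ 1]) (simp add: linear_rule_def cycle3_in_def)
  next
    assume "z 1 = z 2"
    then show ?thesis using \<open>z 1 < 2\<close> by (intro exI[of _ 2]) (simp add: linear_rule_def cycle3_in_def)
  qed
qed

definition six_in :: "nat \<Rightarrow> nat list" where
  "six_in i = [[1, 3], [2, 3, 5], [0, 5], [2, 4], [0, 1, 2], [0, 3, 4]] ! i"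

definition six_coeffs :: "nat \<Rightarrow> nat list" where
  "six_coeffs i = [[1, 1], [2, 2, 2], [2, 2], [1, 2], [2, 1, 1], [2, 2, 2]] ! i"

lemma six_oriented:
  "digraph {..<6} (arcs_of_in_lists 6 six_in)" "asym (arcs_of_in_lists 6 six_in)"
  by (auto simp: digraph_def arcs_of_in_lists_def six_in_def less_Suc_eq eval_nat_numeral intro!: asymI)

lemma six_rule_fixed_point:
  assumes "\<And>u. u < 6 \<Longrightarrow> z u < 3"
  shows "\<exists>i<6. linear_rule 3 (six_coeffs i) (map z (six_in i)) = z i"
proof -
  define wins where "wins i \<longleftrightarrow> linear_rule 3 (six_coeffs i) (map z (six_in i)) = z i" for i
  have digit: "z u = 0 \<or> z u = 1 \<or> z u = 2" if "u < 6" for u using assms[OF that] by auto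
  have "wins 0 \<or> wins 1 \<or> wins 2 \<or> wins 3 \<or> wins 4 \<or> wins 5"
    using digit[of 0, simplified] digit[of 1, simplified] digit[of 2, simplified]
      digit[of 3, simplified] digit[of 4, simplified] digit[of 5, simplified]
    unfolding wins_def by (elim disjE) (simp_all add: linear_rule_def six_in_def six_coeffs_def)
  then have "\<exists>i<6. wins i" by force
  then show ?thesis unfolding wins_def .
qed

lemma q_solvable_six: "q_solvable 3 {..<6} (arcs_of_in_lists 6 six_in)"
proof (rule q_solvable_arcs_of_in_lists)
  show "linear_rule 3 (six_coeffs i) vs < 3" for i vs by (simp add: linear_rule_def)
qed (fact six_rule_fixed_point)

definition two_bit_parity :: "nat list \<Rightarrow> nat" where
  "two_bit_parity vs = 2 * ((\<Sum>v\<leftarrow>vs. v div 2) mod 2) + sum_list vs mod 2"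

lemma two_bit_parity_eq_iff:
  assumes "z < 4"
  shows "two_bit_parity vs = z \<longleftrightarrow> even (z div 2 + (\<Sum>v\<leftarrow>vs. v div 2)) \<and> even (z + sum_list vs)"
proof -
  have "z = 0 \<or> z = 1 \<or> z = 2 \<or> z = 3" using assms by auto
  then show ?thesis unfolding two_bit_parity_def by (elim disjE) (simp_all, presburger+)
qed

text \<open>The closed in-neighbourhoods \<open>{i} \<union> fano_in i\<close> are the complements of the lines of a
  Fano plane, i.e. the supports of the nonzero words of the binary simplex code of dimension 3.\<close>
definition fano_in :: "nat \<Rightarrow> nat list" where
  "fano_in i = [[1, 3, 5], [2, 3, 6], [0, 5, 6], [2, 4, 5], [0, 1, 2], [1, 4, 6], [0, 3, 4]] ! i"

lemma fano_oriented:
  "digraph {..<7} (arcs_of_in_lists 7 fano_in)" "asym (arcs_of_in_lists 7 fano_in)"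
  by (auto simp: digraph_def arcs_of_in_lists_def fano_in_def less_Suc_eq eval_nat_numeral intro!: asymI)

text \<open>The seven disjuncts are the seven nonzero functionals on \<open>\<bbbF>\<^sub>2\<^sup>3\<close>: two vectors of
  \<open>\<bbbF>\<^sub>2\<^sup>3\<close> always have a common nonzero annihilator.\<close>
lemma exists_common_even_subsum:
  fixes a1 a2 a3 b1 b2 b3 :: nat
  shows "(even a1 \<and> even b1) \<or> (even a2 \<and> even b2) \<or> (even a3 \<and> even b3)
    \<or> (even (a1 + a2) \<and> even (b1 + b2)) \<or> (even (a1 + a3) \<and> even (b1 + b3))
    \<or> (even (a2 + a3) \<and> even (b2 + b3)) \<or> (even (a1 + a2 + a3) \<and> even (b1 + b2 + b3))"
  by (cases "even a1"; cases "even a2"; cases "even a3"; cases "even b1"; cases "even b2"; cases "even b3")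
    auto

lemma fano_common_even_check:
  fixes w w' :: "nat \<Rightarrow> nat"
  shows "\<exists>i<7. even (w i + sum_list (map w (fano_in i))) \<and> even (w' i + sum_list (map w' (fano_in i)))"
proof -
  define check where "check v i \<longleftrightarrow> even (v i + sum_list (map v (fano_in i)))"
    for v :: "nat \<Rightarrow> nat" and i
  have "check w 0 \<and> check w' 0 \<or> check w 1 \<and> check w' 1 \<or> check w 2 \<and> check w' 2
    \<or> check w 3 \<and> check w' 3 \<or> check w 4 \<and> check w' 4 \<or> check w 5 \<and> check w' 5
    \<or> check w 6 \<and> check w' 6"
    using exists_common_even_subsum[of "w 2 + w 3 + w 4 + w 5" "w 1 + w 2 + w 3 + w 6"
      "w 0 + w 1 + w 3 + w 5" "w' 2 + w' 3 + w' 4 + w' 5" "w' 1 + w' 2 + w' 3 + w' 6"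
      "w' 0 + w' 1 + w' 3 + w' 5"]
    unfolding check_def by (simp add: fano_in_def) argo
  then have "\<exists>i<7. check w i \<and> check w' i" by force
  then show ?thesis unfolding check_def .
qed

lemma q_solvable_fano: "q_solvable 4 {..<7} (arcs_of_in_lists 7 fano_in)"
proof (rule q_solvable_arcs_of_in_lists[where G = "\<lambda>_. two_bit_parity"])
  show "two_bit_parity vs < 4" for vs by (simp add: two_bit_parity_def)
  fix z :: "nat \<Rightarrow> nat" assume "\<And>u. u < 7 \<Longrightarrow> z u < 4"
  moreover obtain i where "i < 7"
    and "even (z i div 2 + sum_list (map (\<lambda>u. z u div 2) (fano_in i)))"
    and "even (z i + sum_list (map z (fano_in i)))"
    using fano_common_even_check[of "\<lambda>u. z u div 2" z] by blast
  ultimately show "\<exists>i<7. two_bit_parity (map z (fano_in i)) = z i"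
    by (auto simp: two_bit_parity_eq_iff comp_def)
qed

theorem theorem7:
  shows "(\<forall>q::nat. even q \<and> q \<ge> 2 \<longrightarrow>
            (\<exists>(V::nat set) E. digraph V E \<and> card V = 3 * q div 2 \<and>
                q_solvable q V E \<and> clique_number V E = q div 2))
       \<and> (\<forall>q::nat. q > 0 \<and> 3 dvd q \<longrightarrow>
            (\<exists>(V::nat set) E. digraph V E \<and> card V = 4 * q \<and>
                q_solvable q V E \<and> clique_number V E = q div 3))
       \<and> (\<forall>q::nat. q > 0 \<and> 4 dvd q \<longrightarrow>
            (\<exists>(V::nat set) E. digraph V E \<and> card V = 10 * q \<and>
                q_solvable q V E \<and> clique_number V E = q div 4))"
proof (intro conjI allI impI)
  fix q :: nat assume "even q \<and> q \<ge> 2"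
  then obtain m where "q = 2 * m" "0 < m" by auto
  then show "\<exists>(V::nat set) E. digraph V E \<and> card V = 3 * q div 2 \<and>
      q_solvable q V E \<and> clique_number V E = q div 2"
    using solvable_blowup_of_oriented_base[OF q_solvable_cycle3 cycle3_oriented, of m "3 * m"] by simp
next
  fix q :: nat assume "q > 0 \<and> 3 dvd q"
  then obtain m where "q = 3 * m" "0 < m" by auto
  then show "\<exists>(V::nat set) E. digraph V E \<and> card V = 4 * q \<and>
      q_solvable q V E \<and> clique_number V E = q div 3"
    using solvable_blowup_of_oriented_base[OF q_solvable_six six_oriented, of m "12 * m"] by simp
next
  fix q :: nat assume "q > 0 \<and> 4 dvd q"
  then obtain m where "q = 4 * m" "0 < m" by auto
  then show "\<exists>(V::nat set) E. digraph V E \<and> card V = 10 * q \<and>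
      q_solvable q V E \<and> clique_number V E = q div 4"
    using solvable_blowup_of_oriented_base[OF q_solvable_fano fano_oriented, of m "40 * m"] by simp
qed

end
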